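(* Let $V=\langle f,g,h\rangle\subset R_2$ be a three-dimensional space of quadrics in $R=K[w,x,y,z]$ whose space of linear relations $\{(\alpha_1,\alpha_2,\alpha_3)\in R_1^3:\alpha_1f+\alpha_2g+\alpha_3h=0\}$ is exactly one-dimensional. Then $V=\langle \ell\cdot U,h'\rangle$ where $\ell\in R_1$ is a linear form, $U\subset R_1$ is a two-dimensional subspace of linear forms, and $h'$ is a quadric divisible neither by $\ell$ nor by any element of $U$. Consequently, after a linear change of coordinates, either $V=\langle xw,yw,h'\rangle$ with $h'$ divisible neither by $w$ nor by any element of $\langle x,y\rangle$, or $V=\langle w^2,wx,h'\rangle$ with $h'$ divisible by no element of $\langle w,x\rangle$.
   Context: $K$ is an algebraically closed field, $R=K[w,x,y,z]$ standard graded, $R_i$ its degree-$i$ component. A net of quadrics is a three-dimensional subspace $V\subset R_2$; a linear relation is a nonzero triple of linear forms $(\alpha_1,\alpha_2,\alpha_3)$ with $\alpha_1f+\alpha_2g+\alpha_3h=0$. *)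

theory Defs
  imports "HOL-Computational_Algebra.Polynomial" "HOL-Library.Poly_Mapping" "HOL-Library.Numeral_Type"
begin

text \<open>The polynomial ring R = K[w,x,y,z]: finitely supported maps from monomials
 (exponent vectors indexed by the 4-element type, variable 0 = w, 1 = x, 2 = y, 3 = z)
 to coefficients.\<close>
type_synonym 'a mpoly4 = "(4 \<Rightarrow>\<^sub>0 nat) \<Rightarrow>\<^sub>0 'a"

definition Var :: "4 \<Rightarrow> 'a::comm_semiring_1 mpoly4" where
  "Var i = Poly_Mapping.single (Poly_Mapping.single i 1) 1"

definition Const :: "'a::comm_semiring_1 \<Rightarrow> 'a mpoly4" where
  "Const c = Poly_Mapping.single 0 c"

definition mdeg :: "(4 \<Rightarrow>\<^sub>0 nat) \<Rightarrow> nat" where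
  "mdeg m = (\<Sum>i\<in>UNIV. Poly_Mapping.lookup m i)"

definition Rdeg :: "nat \<Rightarrow> 'a::comm_semiring_1 mpoly4 set" where
  "Rdeg d = {p. \<forall>m \<in> Poly_Mapping.keys p. mdeg m = d}"

definition kspan :: "'a::comm_semiring_1 mpoly4 set \<Rightarrow> 'a mpoly4 set" where
  "kspan S = {p. \<exists>F c. finite F \<and> F \<subseteq> S \<and> p = (\<Sum>q\<in>F. Const (c q) * q)}"

definition kindep :: "'a::comm_semiring_1 mpoly4 list \<Rightarrow> bool" where
  "kindep ps \<longleftrightarrow> (\<forall>c. (\<Sum>i<length ps. Const (c i) * ps ! i) = 0 \<longrightarrow> (\<forall>i<length ps. c i = 0))"

definition linrels :: "'a::comm_semiring_1 mpoly4 \<Rightarrow> 'a mpoly4 \<Rightarrow> 'a mpoly4 \<Rightarrow>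
    ('a mpoly4 \<times> 'a mpoly4 \<times> 'a mpoly4) set" where
  "linrels f g h = {(a1, a2, a3). a1 \<in> Rdeg 1 \<and> a2 \<in> Rdeg 1 \<and> a3 \<in> Rdeg 1 \<and>
                                 a1 * f + a2 * g + a3 * h = 0}"

definition one_dim_triples :: "('a::comm_semiring_1 mpoly4 \<times> 'a mpoly4 \<times> 'a mpoly4) set \<Rightarrow> bool" where
  "one_dim_triples S \<longleftrightarrow> (\<exists>r1 r2 r3. (r1, r2, r3) \<noteq> (0, 0, 0) \<and>
      S = {(Const c * r1, Const c * r2, Const c * r3) | c. True})"

end

(* Let (r1, r2, r3) span the linear relations of f, g, h. If r1, r2, r3 were linearly
   independent, the relation would be a Koszul syzygy: f = r2 m + r3 s, g = r3 t - r1 m,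
   h = - r1 s - r2 t with linear m, s, t, and then (t, - s, m) would be a second relation that
   is not a multiple of (r1, r2, r3). So, up to permuting f, g, h, we have r3 = c1 r1 + c2 r2,
   and p = f + c1 h, q = g + c2 h satisfy r1 p + r2 q = 0 with r1, r2 independent. Hence
   p = l r2 and q = - l r1, that is V = <l U, h> with U = <r2, r1>. A factor of h in l or in
   U would yield a relation among p, q, h with nonzero h-coefficient, which the multiples of
   (r1, r2, r3) do not have. The normal forms come from completing l, r2, r1 (or l and one
   element of U, when l lies in U) to a basis of R_1.
   Divisibility by a linear form b is decided by the substitution that eliminates a variable
   using b, so no factoriality of R is needed. *)

theory Submission
  imports Defs
begin

abbreviation lookup :: "('a \<Rightarrow>\<^sub>0 'b::zero) \<Rightarrow> 'a \<Rightarrow> 'b" where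
  "lookup \<equiv> Poly_Mapping.lookup"

abbreviation keys :: "('a \<Rightarrow>\<^sub>0 'b::zero) \<Rightarrow> 'a set" where
  "keys \<equiv> Poly_Mapping.keys"

abbreviation single :: "'a \<Rightarrow> 'b::zero \<Rightarrow> 'a \<Rightarrow>\<^sub>0 'b" where
  "single \<equiv> Poly_Mapping.single"

(* Keeps degree-one exponent vectors in the form single j 1 rather than single j (Suc 0). *)
declare One_nat_def [simp del]

lemma Const_mult: "Const a * Const b = (Const (a * b) :: 'a::comm_semiring_1 mpoly4)"
  by (simp add: Const_def mult_single)

lemma Const_mult_Const_mult: "Const a * (Const b * p) = Const (a * b) * (p :: 'a::comm_semiring_1 mpoly4)"
  by (simp add: mult.assoc[symmetric] Const_mult)

lemma Const_add: "Const (a + b) = (Const a + Const b :: 'a::comm_semiring_1 mpoly4)"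
  by (simp add: Const_def single_add)

lemma Const_0 [simp]: "(Const 0 :: 'a::comm_semiring_1 mpoly4) = 0"
  by (simp add: Const_def)

lemma Const_1 [simp]: "(Const 1 :: 'a::comm_semiring_1 mpoly4) = 1"
  by (simp add: Const_def one_poly_mapping.abs_eq single.abs_eq)

lemma Const_uminus: "Const (- a) = (- Const a :: 'a::comm_ring_1 mpoly4)"
  by (simp add: Const_def single_uminus)

lemma Const_diff: "Const (a - b) = (Const a - Const b :: 'a::comm_ring_1 mpoly4)"
  by (simp add: Const_def single_diff)

lemma lookup_Const_mult: "lookup (Const c * p) m = c * lookup (p :: 'a::comm_semiring_1 mpoly4) m"
proof -
  have "lookup (Poly_Mapping.map ((*) c) p) m = c * lookup p m"
    by transfer (simp add: when_def)
  then show ?thesis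
    by (simp add: Const_def mult_map_scale_conv_mult[symmetric])
qed

interpretation vs: vector_space "\<lambda>c p. Const c * (p :: 'a::field mpoly4)"
  by unfold_locales (simp_all add: distrib_left Const_add distrib_right Const_mult_Const_mult)

lemma kspan_eq_span: "kspan S = vs.span (S :: 'a::field mpoly4 set)"
  unfolding kspan_def vs.span_explicit by blast

subsection \<open>Homogeneous components\<close>

lemma poly_mapping_monomial_expansion: "p = (\<Sum>m\<in>keys p. single m (lookup p m))"
proof (rule poly_mapping_eqI)
  fix k
  have "lookup (\<Sum>m\<in>keys p. single m (lookup p m)) k = (\<Sum>m\<in>keys p. lookup p m when m = k)"
    by (simp add: lookup_sum lookup_single)
  also have "\<dots> = lookup p k"
    by (cases "k \<in> keys p") (auto simp: when_def in_keys_iff)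
  finally show "lookup p k = lookup (\<Sum>m\<in>keys p. single m (lookup p m)) k" ..
qed

lemma mdeg_add: "mdeg (m + n) = mdeg m + mdeg n"
  by (simp add: mdeg_def lookup_add sum.distrib)

lemma mdeg_single: "mdeg (single i n) = n"
  by (simp add: mdeg_def lookup_single when_def)

lemma Rdeg_iff: "p \<in> Rdeg d \<longleftrightarrow> (\<forall>m. lookup p m \<noteq> 0 \<longrightarrow> mdeg m = d)"
  by (auto simp: Rdeg_def in_keys_iff)

lemma Rdeg_0 [simp]: "0 \<in> Rdeg d"
  by (simp add: Rdeg_iff)

lemma Rdeg_add: "p \<in> Rdeg d \<Longrightarrow> q \<in> Rdeg d \<Longrightarrow> p + q \<in> Rdeg d"
  unfolding Rdeg_iff by (metis add.right_neutral lookup_add)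

lemma Rdeg_uminus: "p \<in> Rdeg d \<Longrightarrow> - (p :: 'a::comm_ring_1 mpoly4) \<in> Rdeg d"
  by (simp add: Rdeg_iff)

lemma Rdeg_diff: "p \<in> Rdeg d \<Longrightarrow> q \<in> Rdeg d \<Longrightarrow> (p :: 'a::comm_ring_1 mpoly4) - q \<in> Rdeg d"
  unfolding Rdeg_iff by (metis diff_self lookup_minus)

lemma Rdeg_Const_mult: "p \<in> Rdeg d \<Longrightarrow> Const c * p \<in> Rdeg d"
  unfolding Rdeg_iff by (metis lookup_Const_mult mult_zero_right)

lemma Var_Rdeg: "Var i \<in> Rdeg 1"
  by (simp add: Rdeg_iff Var_def lookup_single when_def mdeg_single)

definition hcomp :: "nat \<Rightarrow> 'a::comm_semiring_1 mpoly4 \<Rightarrow> 'a mpoly4" where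
  "hcomp d p = Abs_poly_mapping (\<lambda>m. if mdeg m = d then lookup p m else 0)"

lemma lookup_hcomp: "lookup (hcomp d p) m = (if mdeg m = d then lookup p m else 0)"
proof -
  have "finite {m. (if mdeg m = d then lookup p m else 0) \<noteq> 0}"
    by (rule finite_subset[of _ "keys p"]) (auto simp: in_keys_iff)
  then show ?thesis
    by (simp add: hcomp_def)
qed

lemma hcomp_Rdeg: "hcomp d p \<in> Rdeg d"
  by (simp add: Rdeg_iff lookup_hcomp)

lemma hcomp_id: "p \<in> Rdeg d \<Longrightarrow> hcomp d p = p"
  by (rule poly_mapping_eqI) (auto simp: lookup_hcomp Rdeg_iff)

lemma hcomp_add: "hcomp d (p + q) = hcomp d p + hcomp d q"
  by (rule poly_mapping_eqI) (simp add: lookup_hcomp lookup_add)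

lemma hcomp_diff: "hcomp d (p - q) = hcomp d p - hcomp d (q :: 'a::comm_ring_1 mpoly4)"
  by (rule poly_mapping_eqI) (simp add: lookup_hcomp lookup_minus)

lemma hcomp_uminus: "hcomp d (- p) = - hcomp d (p :: 'a::comm_ring_1 mpoly4)"
  by (rule poly_mapping_eqI) (simp add: lookup_hcomp)

lemma hcomp_Const_mult: "hcomp d (Const c * p) = Const c * hcomp d p"
  by (rule poly_mapping_eqI) (simp add: lookup_hcomp lookup_Const_mult)

lemma hcomp_sum: "hcomp d (sum f A) = (\<Sum>a\<in>A. hcomp d (f a))"
  by (induction A rule: infinite_finite_induct) (auto simp: hcomp_add poly_mapping_eqI lookup_hcomp)

lemma hcomp_single:
  "hcomp d (single m c) = (if mdeg m = d then single m c else 0)"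
  by (rule poly_mapping_eqI) (auto simp: lookup_hcomp lookup_single when_def)

lemma hcomp_Var_mult: "hcomp (Suc d) (Var j * q) = Var j * hcomp d q"
proof -
  let ?e = "single j (1::nat)"
  have "hcomp (Suc d) (Var j * q) =
      (\<Sum>n\<in>keys q. if mdeg n = d then single (?e + n) (lookup q n) else 0)"
    by (subst poly_mapping_monomial_expansion[of q])
       (simp add: sum_distrib_left Var_def mult_single hcomp_sum hcomp_single mdeg_add mdeg_single
         cong: if_cong)
  also have "\<dots> = Var j * (\<Sum>n\<in>keys q. if mdeg n = d then single n (lookup q n) else 0)"
    by (simp add: sum_distrib_left Var_def mult_single if_distrib cong: if_cong)
  also have "(\<Sum>n\<in>keys q. if mdeg n = d then single n (lookup q n) else 0) = hcomp d q"
    by (subst (2) poly_mapping_monomial_expansion[of q]) (simp add: hcomp_sum hcomp_single)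
  finally show ?thesis .
qed

subsection \<open>Linear forms\<close>

definition coef :: "'a::comm_semiring_1 mpoly4 \<Rightarrow> 4 \<Rightarrow> 'a" where
  "coef p j = lookup p (single j 1)"

lemma single_1_eq_iff [simp]: "single i (1::nat) = single j 1 \<longleftrightarrow> i = j"
  by (metis lookup_single_eq lookup_single_not_eq zero_neq_one)

lemma mdeg_eq_1_iff: "mdeg m = 1 \<longleftrightarrow> (\<exists>j. m = single j 1)"
proof
  assume "mdeg m = 1"
  then have sum1: "(\<Sum>i\<in>UNIV. lookup m i) = 1"
    by (simp add: mdeg_def)
  then obtain j where j: "lookup m j \<noteq> 0"
    by (metis (no_types, lifting) sum.neutral zero_neq_one)
  have "lookup m j + (\<Sum>i\<in>UNIV - {j}. lookup m i) = 1"
    using sum1 by (simp add: sum.remove)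
  then have "lookup m j = 1" "(\<Sum>i\<in>UNIV - {j}. lookup m i) = 0"
    using j by linarith+
  then have "m = single j 1"
    by (intro poly_mapping_eqI) (auto simp: lookup_single when_def)
  then show "\<exists>j. m = single j 1" ..
qed (auto simp: mdeg_single)

lemma lookup_Var: "lookup (Var i) (single j 1) = (if i = j then 1 else 0)"
  by (simp add: Var_def lookup_single when_def)

lemma Const_mult_Var: "Const c * Var j = single (single j 1) c"
  by (simp add: Const_def Var_def mult_single)

lemma linear_form_expansion:
  assumes "p \<in> Rdeg 1"
  shows "p = (\<Sum>j\<in>UNIV. Const (coef p j) * Var j)"
proof (rule poly_mapping_eqI)
  fix m
  have lhs: "lookup (\<Sum>j\<in>UNIV. Const (coef p j) * Var j) m = (\<Sum>j\<in>UNIV. coef p j when single j 1 = m)"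
    by (simp add: Const_mult_Var lookup_sum lookup_single)
  show "lookup p m = lookup (\<Sum>j\<in>UNIV. Const (coef p j) * Var j) m"
  proof (cases "mdeg m = 1")
    case True
    then obtain i where i: "m = single i 1"
      using mdeg_eq_1_iff by blast
    have "(\<Sum>j\<in>UNIV. coef p j when single j 1 = m) = (\<Sum>j\<in>UNIV. if j = i then coef p j else 0)"
      by (rule sum.cong) (auto simp: i when_def)
    then show ?thesis
      unfolding lhs by (simp add: coef_def i)
  next
    case False
    then have "lookup p m = 0" "\<And>j. single j 1 \<noteq> m"
      using assms mdeg_single unfolding Rdeg_iff by metis+
    then show ?thesis
      unfolding lhs by (simp add: when_def)
  qed
qed

lemma linear_form_nonzero_coef: "p \<in> Rdeg 1 \<Longrightarrow> p \<noteq> 0 \<Longrightarrow> \<exists>i. coef p i \<noteq> 0"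
  by (metis (no_types, lifting) linear_form_expansion Const_0 mult_zero_left sum.neutral)

lemma hcomp_linear_mult:
  assumes "u \<in> Rdeg 1"
  shows "hcomp (Suc d) (u * q) = u * hcomp d q"
  by (subst (1 2) linear_form_expansion[OF assms])
     (simp add: sum_distrib_right hcomp_sum mult.assoc hcomp_Const_mult hcomp_Var_mult)

lemma linear_dvd_formE:
  assumes "u \<in> Rdeg 1" "p \<in> Rdeg (Suc d)" "u dvd p"
  obtains q where "q \<in> Rdeg d" "p = u * q"
proof -
  from \<open>u dvd p\<close> obtain q where "p = u * q" ..
  then have "p = u * hcomp d q"
    using hcomp_id[OF assms(2)] hcomp_linear_mult[OF assms(1)] by metis
  then show thesis
    by (rule that[OF hcomp_Rdeg])
qed

subsection \<open>Substitution\<close>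

definition subst :: "(4 \<Rightarrow> 'a::comm_semiring_1 mpoly4) \<Rightarrow> 'a mpoly4 \<Rightarrow> 'a mpoly4" where
  "subst \<sigma> p = (\<Sum>m\<in>keys p. Const (lookup p m) * (\<Prod>i\<in>UNIV. \<sigma> i ^ lookup m i))"

lemma subst_over_superset:
  assumes "finite S" "keys p \<subseteq> S"
  shows "subst \<sigma> p = (\<Sum>m\<in>S. Const (lookup p m) * (\<Prod>i\<in>UNIV. \<sigma> i ^ lookup m i))"
  unfolding subst_def by (rule sum.mono_neutral_left) (use assms in \<open>auto simp: in_keys_iff\<close>)

lemma subst_single: "subst \<sigma> (single m c) = Const c * (\<Prod>i\<in>UNIV. \<sigma> i ^ lookup m i)"
  by (subst subst_over_superset[of "{m}"]) auto

lemma subst_add: "subst \<sigma> (p + q) = subst \<sigma> p + subst \<sigma> q"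
proof -
  let ?S = "keys p \<union> keys q"
  have "keys (p + q) \<subseteq> ?S"
    by (rule keys_add)
  then show ?thesis
    by (simp add: subst_over_superset[of ?S] lookup_add Const_add distrib_right sum.distrib)
qed

lemma subst_0 [simp]: "subst \<sigma> 0 = 0"
  by (simp add: subst_def)

lemma subst_sum: "subst \<sigma> (sum f A) = (\<Sum>a\<in>A. subst \<sigma> (f a))"
  by (induction A rule: infinite_finite_induct) (auto simp: subst_add)

lemma subst_mult: "subst \<sigma> (p * q) = subst \<sigma> p * subst \<sigma> q"
proof -
  let ?P = "\<lambda>m. \<Prod>i\<in>UNIV. \<sigma> i ^ lookup m i"
  have pq: "p * q = (\<Sum>m\<in>keys p. \<Sum>n\<in>keys q. single (m + n) (lookup p m * lookup q n))"
    by (subst (1 2) poly_mapping_monomial_expansion) (simp add: sum_product mult_single)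
  have "subst \<sigma> (p * q) =
      (\<Sum>m\<in>keys p. \<Sum>n\<in>keys q. (Const (lookup p m) * ?P m) * (Const (lookup q n) * ?P n))"
    unfolding pq by (simp add: subst_sum subst_single Const_mult[symmetric] lookup_add power_add
        prod.distrib ac_simps)
  also have "\<dots> = subst \<sigma> p * subst \<sigma> q"
    by (simp add: subst_def sum_product)
  finally show ?thesis .
qed

lemma subst_Const_mult: "subst \<sigma> (Const c * p) = Const c * subst \<sigma> p"
  using subst_single[of \<sigma> 0 c] by (simp add: subst_mult Const_def)

lemma subst_Var [simp]: "subst \<sigma> (Var i) = \<sigma> i"
proof -
  have "(\<Prod>j\<in>UNIV. \<sigma> j ^ lookup (single i (1::nat)) j) = (\<Prod>j\<in>UNIV. if j = i then \<sigma> j else 1)"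
    by (rule prod.cong) (auto simp: lookup_single)
  then show ?thesis
    by (simp add: Var_def subst_single)
qed

lemma subst_linear: "p \<in> Rdeg 1 \<Longrightarrow> subst \<sigma> p = (\<Sum>j\<in>UNIV. Const (coef p j) * \<sigma> j)"
  by (subst linear_form_expansion) (simp_all add: subst_sum subst_Const_mult)

lemma subst_Var_id: "subst Var p = p"
proof -
  have monomial: "(\<Prod>i\<in>UNIV. Var i ^ lookup m i) = (single m 1 :: 'a mpoly4)" for m
  proof -
    have "Var i ^ k = (single (single i k) 1 :: 'a mpoly4)" for i k
      by (induction k) (simp_all add: Var_def mult_single single_add[symmetric] Suc_eq_plus1_left[symmetric])
    then have "(\<Prod>i\<in>UNIV. Var i ^ lookup m i) = (\<Prod>i\<in>UNIV. single (single i (lookup m i)) (1::'a))"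
      by simp
    also have "\<dots> = single (\<Sum>i\<in>UNIV. single i (lookup m i)) 1"
      by (induction rule: infinite_finite_induct) (auto simp: mult_single)
    also have "(\<Sum>i\<in>UNIV. single i (lookup m i)) = m"
      by (rule poly_mapping_eqI) (simp add: lookup_sum lookup_single when_def)
    finally show ?thesis .
  qed
  show ?thesis
    by (subst (2) poly_mapping_monomial_expansion) (simp add: subst_def monomial Const_def mult_single)
qed

lemma dvd_diff_subst:
  assumes "\<And>j. b dvd Var j - \<sigma> j"
  shows "b dvd p - subst \<sigma> (p :: 'a::comm_ring_1 mpoly4)"
proof -
  have cong_mult: "b dvd x * x' - y * y'" if "b dvd x - y" "b dvd x' - y'" for x x' y y' :: "'a mpoly4"
  proof -
    have "x * x' - y * y' = x * (x' - y') + (x - y) * y'"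
      by (simp add: algebra_simps)
    then show ?thesis
      using that by simp
  qed
  have "b dvd (\<Prod>i\<in>A. Var i ^ lookup m i) - (\<Prod>i\<in>A. \<sigma> i ^ lookup m i)" for m A
  proof (induction A rule: infinite_finite_induct)
    case (insert i A)
    have "b dvd Var i ^ k - \<sigma> i ^ k" for k
      by (induction k) (auto intro: cong_mult assms)
    with insert show ?case
      by (auto intro: cong_mult)
  qed simp_all
  then have "b dvd subst Var p - subst \<sigma> p"
    by (auto simp: subst_def sum_subtractf[symmetric] right_diff_distrib[symmetric] intro!: dvd_sum)
  then show ?thesis
    by (simp add: subst_Var_id)
qed

(* Sends b to 0 when coef b i \<noteq> 0; otherwise it is the identity, as 1 / 0 = 0. *)
definition elim_subst :: "'a::field mpoly4 \<Rightarrow> 4 \<Rightarrow> 4 \<Rightarrow> 'a mpoly4" where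
  "elim_subst b i = (\<lambda>j. Var j - (if j = i then Const (1 / coef b i) * b else 0))"

lemma subst_elim_subst_linear:
  assumes "a \<in> Rdeg 1"
  shows "subst (elim_subst b i) a = a - Const (coef a i / coef b i) * b"
proof -
  let ?X = "Const (1 / coef b i) * b"
  have "subst (elim_subst b i) a =
      (\<Sum>j\<in>UNIV. Const (coef a j) * Var j) - (\<Sum>j\<in>UNIV. if j = i then Const (coef a j) * ?X else 0)"
    unfolding subst_linear[OF assms] elim_subst_def
    by (simp add: right_diff_distrib sum_subtractf if_distrib[of "(*) _"] cong: if_cong)
  also have "\<dots> = a - Const (coef a i) * ?X"
    using linear_form_expansion[OF assms] by simp
  finally show ?thesis
    by (simp add: Const_mult_Const_mult)
qed

lemma linear_form_eliminationE:
  fixes b :: "'a::field mpoly4"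
  assumes "b \<in> Rdeg 1" "b \<noteq> 0"
  obtains \<sigma> where "\<And>p. b dvd p - subst \<sigma> p" and "subst \<sigma> b = 0"
    and "\<And>a. a \<in> Rdeg 1 \<Longrightarrow> \<exists>k. subst \<sigma> a = a - Const k * b"
proof -
  obtain i where i: "coef b i \<noteq> 0"
    using linear_form_nonzero_coef assms by blast
  have "b dvd p - subst (elim_subst b i) p" for p
    by (rule dvd_diff_subst) (simp add: elim_subst_def)
  moreover have "subst (elim_subst b i) b = 0"
    using i by (simp add: subst_elim_subst_linear[OF assms(1)])
  moreover have "\<exists>k. subst (elim_subst b i) a = a - Const k * b" if "a \<in> Rdeg 1" for a
    by (intro exI) (rule subst_elim_subst_linear[OF that])
  ultimately show thesis
    by (rule that)
qed

subsection \<open>Linear independence and spans\<close>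

lemma kindep_nonzero:
  assumes "kindep ps" "p \<in> set ps"
  shows "p \<noteq> 0"
proof
  assume "p = 0"
  obtain i where i: "i < length ps" "ps ! i = p"
    using assms(2) by (auto simp: in_set_conv_nth)
  have "(\<Sum>j<length ps. Const (if j = i then 1 else 0) * ps ! j) = (\<Sum>j<length ps. if j = i then p else 0)"
    using i by (intro sum.cong) auto
  also have "\<dots> = 0"
    using \<open>p = 0\<close> by simp
  finally show False
    using assms(1) i unfolding kindep_def by fastforce
qed

lemma kindep_pair_iff:
  "kindep [a, b] \<longleftrightarrow> (\<forall>x y. Const x * a + Const y * b = 0 \<longrightarrow> x = 0 \<and> y = 0)"
proof -
  have sum: "(\<Sum>i<length [a, b]. Const (c i) * [a, b] ! i) = Const (c 0) * a + Const (c 1) * b"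
    and all: "(\<forall>i<length [a, b]. c i = 0) \<longleftrightarrow> c 0 = 0 \<and> c 1 = 0" for c
    by (auto simp: numeral_2_eq_2 less_Suc_eq One_nat_def)
  show ?thesis
    unfolding kindep_def sum all
  proof (intro iffI allI impI)
    fix x y
    assume all: "\<forall>c :: nat \<Rightarrow> _. Const (c 0) * a + Const (c 1) * b = 0 \<longrightarrow> c 0 = 0 \<and> c 1 = 0"
      and rel: "Const x * a + Const y * b = 0"
    show "x = 0 \<and> y = 0"
      using all[rule_format, of "\<lambda>i. if i = 0 then x else y"] rel by simp
  qed auto
qed

lemma kindep_triple_iff:
  "kindep [a, b, c] \<longleftrightarrow>
    (\<forall>x y z. Const x * a + Const y * b + Const z * c = 0 \<longrightarrow> x = 0 \<and> y = 0 \<and> z = 0)"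
proof -
  have sum: "(\<Sum>i<length [a, b, c]. Const (d i) * [a, b, c] ! i) =
      Const (d 0) * a + Const (d 1) * b + Const (d 2) * c"
    and all: "(\<forall>i<length [a, b, c]. d i = 0) \<longleftrightarrow> d 0 = 0 \<and> d 1 = 0 \<and> d 2 = 0" for d
    by (auto simp: eval_nat_numeral less_Suc_eq add.assoc One_nat_def)
  show ?thesis
    unfolding kindep_def sum all
  proof (intro iffI allI impI)
    fix x y z
    assume all: "\<forall>d :: nat \<Rightarrow> _. Const (d 0) * a + Const (d 1) * b + Const (d 2) * c = 0 \<longrightarrow>
        d 0 = 0 \<and> d 1 = 0 \<and> d 2 = 0"
      and rel: "Const x * a + Const y * b + Const z * c = 0"
    show "x = 0 \<and> y = 0 \<and> z = 0"
      using all[rule_format, of "\<lambda>i. if i = 0 then x else if i = 1 then y else z"] rel by simp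
  qed auto
qed

lemma kindep_pair_swap:
  assumes "kindep [a, b]"
  shows "kindep [b, a]"
  unfolding kindep_pair_iff
proof (intro allI impI)
  fix x y
  assume "Const x * b + Const y * a = 0"
  then have "Const y * a + Const x * b = 0"
    by (simp add: ac_simps)
  with assms show "x = 0 \<and> y = 0"
    unfolding kindep_pair_iff by blast
qed

lemma kindep_pair_rotate:
  fixes a b :: "'a::comm_ring_1 mpoly4"
  assumes "kindep [a, b]"
  shows "kindep [b, - a]"
  unfolding kindep_pair_iff
proof (intro allI impI)
  fix x y
  assume "Const x * b + Const y * - a = 0"
  then have "Const (- y) * a + Const x * b = 0"
    by (simp add: Const_uminus ac_simps)
  with assms show "x = 0 \<and> y = 0"
    unfolding kindep_pair_iff by fastforce
qed

lemma kindep_triple_swap23: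
  assumes "kindep [a, b, c]"
  shows "kindep [a, c, b]"
  unfolding kindep_triple_iff
proof (intro allI impI)
  fix x y z
  assume "Const x * a + Const y * c + Const z * b = 0"
  then have "Const x * a + Const z * b + Const y * c = 0"
    by (simp add: ac_simps)
  with assms show "x = 0 \<and> y = 0 \<and> z = 0"
    unfolding kindep_triple_iff by blast
qed

lemma kindep_triple_rotate:
  assumes "kindep [a, b, c]"
  shows "kindep [b, c, a]"
  unfolding kindep_triple_iff
proof (intro allI impI)
  fix x y z
  assume "Const x * b + Const y * c + Const z * a = 0"
  then have "Const z * a + Const x * b + Const y * c = 0"
    by (simp add: ac_simps)
  with assms show "x = 0 \<and> y = 0 \<and> z = 0"
    unfolding kindep_triple_iff by blast
qed

lemma kindep_snoc:
  fixes ps :: "'a::field mpoly4 list"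
  assumes indep: "kindep ps" and notin: "v \<notin> vs.span (set ps)"
  shows "kindep (ps @ [v])"
  unfolding kindep_def
proof (intro allI impI)
  fix c i
  let ?n = "length ps"
  let ?s = "\<Sum>j<?n. Const (c j) * ps ! j"
  assume rel: "(\<Sum>j<length (ps @ [v]). Const (c j) * (ps @ [v]) ! j) = 0"
    and i: "i < length (ps @ [v])"
  have "(\<Sum>j<length (ps @ [v]). Const (c j) * (ps @ [v]) ! j) = ?s + Const (c ?n) * v"
    by (simp add: nth_append)
  with rel have "?s + Const (c ?n) * v = 0"
    by simp
  then have last: "Const (c ?n) * v = - ?s"
    by (rule minus_unique[symmetric])
  have "c ?n = 0"
  proof (rule ccontr)
    assume "c ?n \<noteq> 0"
    then have "v = Const (1 / c ?n) * (Const (c ?n) * v)"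
      by (simp add: Const_mult_Const_mult)
    also have "\<dots> \<in> vs.span (set ps)"
      unfolding last by (intro vs.span_scale vs.span_neg vs.span_sum vs.span_base) simp
    finally show False
      using notin by contradiction
  qed
  with last have "?s = 0"
    by simp
  then have "c j = 0" if "j < ?n" for j
    using indep[unfolded kindep_def, rule_format, of c j] that by blast
  then show "c i = 0"
    using i \<open>c ?n = 0\<close> by (cases "i = ?n") auto
qed

lemma Var_notin_spanE:
  assumes "finite S" "card S < 4"
  obtains i where "Var i \<notin> vs.span (S :: 'a::field mpoly4 set)"
proof -
  have inj: "inj (Var :: 4 \<Rightarrow> 'a mpoly4)"
    by (rule injI) (metis lookup_Var one_neq_zero)
  have "vs.independent (range (Var :: 4 \<Rightarrow> 'a mpoly4))"
  proof
    assume "vs.dependent (range (Var :: 4 \<Rightarrow> 'a mpoly4))"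
    then obtain u where u: "\<exists>v\<in>range Var. u v \<noteq> 0"
      "(\<Sum>v\<in>range (Var :: 4 \<Rightarrow> 'a mpoly4). Const (u v) * v) = 0"
      using vs.dependent_finite[of "range Var"] by auto
    have "lookup (\<Sum>i\<in>UNIV. Const (u (Var i)) * (Var i :: 'a mpoly4)) (single j 1) = u (Var j)" for j
      by (simp add: lookup_sum lookup_Const_mult lookup_Var if_distrib cong: if_cong)
    then show False
      using u by (simp add: sum.reindex[OF inj])
  qed
  moreover have "card (range (Var :: 4 \<Rightarrow> 'a mpoly4)) = 4"
    using card_image[OF inj] by simp
  ultimately have "\<not> range Var \<subseteq> vs.span S"
    using vs.independent_span_bound[OF assms(1)] assms(2) by fastforce
  then obtain i where "Var i \<notin> vs.span S"
    by blast
  then show thesis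
    by (rule that)
qed

lemma kindep_extendE:
  fixes ps :: "'a::field mpoly4 list"
  assumes "kindep ps" "length ps < 4"
  obtains v where "v \<in> Rdeg 1" "kindep (ps @ [v])"
proof -
  have "card (set ps) < 4"
    using card_length assms(2) le_less_trans by blast
  then obtain i where "(Var i :: 'a mpoly4) \<notin> vs.span (set ps)"
    by (rule Var_notin_spanE[OF finite_set])
  then show thesis
    by (rule that[OF Var_Rdeg kindep_snoc[OF assms(1)]])
qed

lemma kspan_pairE:
  assumes "u \<in> kspan {a, b :: 'a::field mpoly4}"
  obtains s t where "u = Const s * a + Const t * b"
proof -
  obtain s where "u - Const s * a \<in> vs.span {b}"
    using assms vs.span_breakdown_eq unfolding kspan_eq_span by blast
  then obtain t where "u - Const s * a = Const t * b"
    using vs.span_singleton by blast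
  then have "u = Const s * a + Const t * b"
    by (simp add: algebra_simps)
  then show thesis
    by (rule that)
qed

lemma kspan_replace_by_combination:
  fixes x y z :: "'a::field mpoly4"
  assumes "s \<noteq> 0"
  shows "kspan {Const s * x + Const t * y, y, z} = kspan {x, y, z}"
  unfolding kspan_eq_span
proof (rule vs.span_eq[THEN iffD2], intro conjI)
  have "x = Const (1 / s) * (Const s * x + Const t * y) - Const (t / s) * y"
    using assms by (simp add: distrib_left Const_mult_Const_mult)
  also have "\<dots> \<in> vs.span {Const s * x + Const t * y, y, z}"
    by (intro vs.span_diff vs.span_scale vs.span_base) auto
  finally show "{x, y, z} \<subseteq> vs.span {Const s * x + Const t * y, y, z}"
    by (auto intro: vs.span_base)
  have "Const s * x + Const t * y \<in> vs.span {x, y, z}"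
    by (intro vs.span_add vs.span_scale vs.span_base) auto
  then show "{Const s * x + Const t * y, y, z} \<subseteq> vs.span {x, y, z}"
    by (auto intro: vs.span_base)
qed

lemma kspan_shear:
  fixes f g h :: "'a::field mpoly4"
  shows "kspan {f + Const a * h, g + Const b * h, h} = kspan {f, g, h}"
  unfolding kspan_eq_span
proof (rule vs.span_eq[THEN iffD2], intro conjI)
  have "f + Const a * h - Const a * h \<in> vs.span {f + Const a * h, g + Const b * h, h}"
    "g + Const b * h - Const b * h \<in> vs.span {f + Const a * h, g + Const b * h, h}"
    by (intro vs.span_diff vs.span_scale vs.span_base; simp)+
  then show "{f, g, h} \<subseteq> vs.span {f + Const a * h, g + Const b * h, h}"
    by (auto intro: vs.span_base)
  have "f + Const a * h \<in> vs.span {f, g, h}" "g + Const b * h \<in> vs.span {f, g, h}"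
    by (intro vs.span_add vs.span_scale vs.span_base; simp)+
  then show "{f + Const a * h, g + Const b * h, h} \<subseteq> vs.span {f, g, h}"
    by (auto intro: vs.span_base)
qed

lemma combination_eq_0_solve:
  fixes a b c :: "'a::field mpoly4"
  assumes "Const x * a + Const y * b + Const z * c = 0" "z \<noteq> 0"
  shows "c = Const (- x / z) * a + Const (- y / z) * b"
proof -
  have "Const z * c = - (Const x * a + Const y * b)"
    using assms(1) by (rule minus_unique[symmetric])
  have "c = Const (1 / z) * (Const z * c)"
    using assms(2) by (simp add: Const_mult_Const_mult)
  also have "\<dots> = Const (1 / z) * - (Const x * a + Const y * b)"
    by (simp only: \<open>Const z * c = _\<close>)
  also have "\<dots> = Const (- x / z) * a + Const (- y / z) * b"
    by (simp add: right_diff_distrib Const_mult_Const_mult Const_uminus)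
  finally show ?thesis .
qed

subsection \<open>Linear syzygies\<close>

lemma linear_relation_dvd:
  fixes a b p q :: "'a::field mpoly4"
  assumes "a \<in> Rdeg 1" "b \<in> Rdeg 1" "kindep [a, b]" "a * p + b * q = 0"
  shows "b dvd p"
proof -
  have "b \<noteq> 0"
    using kindep_nonzero[OF assms(3)] by simp
  then obtain \<sigma> where dvd: "b dvd p - subst \<sigma> p" and kill_b: "subst \<sigma> b = 0"
    and lin: "\<And>a. a \<in> Rdeg 1 \<Longrightarrow> \<exists>k. subst \<sigma> a = a - Const k * b"
    using linear_form_eliminationE[OF assms(2)] by blast
  obtain k where k: "subst \<sigma> a = a - Const k * b"
    using lin[OF assms(1)] by blast
  have "Const 1 * a + Const (- k) * b \<noteq> 0"
    using assms(3) unfolding kindep_pair_iff by (metis one_neq_zero)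
  then have "subst \<sigma> a \<noteq> 0"
    by (simp add: k Const_uminus)
  moreover have "subst \<sigma> a * subst \<sigma> p = 0"
    using arg_cong[OF assms(4), of "subst \<sigma>"] by (simp add: subst_add subst_mult kill_b)
  ultimately show ?thesis
    using dvd by simp
qed

lemma kindep_relation_coeffs:
  fixes p q r1 r2 :: "'a::field mpoly4"
  assumes indep: "kindep [p, q]" and rel: "r1 * p + r2 * q = 0" and nz: "(r1, r2) \<noteq> (0, 0)"
  shows "kindep [r1, r2]"
  unfolding kindep_pair_iff
proof (intro allI impI)
  fix x y
  assume xy: "Const x * r1 + Const y * r2 = 0"
  let ?w = "Const y * p - Const x * q"
  txt \<open>Both r1 and r2 annihilate ?w, and one of them is nonzero.\<close>
  have "r1 * ?w = Const y * (r1 * p + r2 * q) - (Const x * r1 + Const y * r2) * q"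
    "r2 * ?w = (Const x * r1 + Const y * r2) * p - Const x * (r1 * p + r2 * q)"
    by (simp_all add: algebra_simps)
  then have "r1 * ?w = 0" "r2 * ?w = 0"
    by (simp_all add: rel xy)
  then have "Const y * p + Const (- x) * q = 0"
    using nz by (auto simp: Const_uminus)
  then show "x = 0 \<and> y = 0"
    using indep unfolding kindep_pair_iff by fastforce
qed

lemma koszul_syzygy:
  fixes a b c f g h :: "'a::field mpoly4"
  assumes a: "a \<in> Rdeg 1" and b: "b \<in> Rdeg 1" and c: "c \<in> Rdeg 1"
    and indep: "kindep [a, b, c]" and rel: "a * f + b * g + c * h = 0"
  obtains m s t where "f = b * m + c * s" "g = c * t - a * m" "h = - (a * s) - b * t"
proof -
  txt \<open>Modulo c the relation becomes a two-term relation between independent linear forms.\<close>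
  have "c \<noteq> 0"
    using kindep_nonzero[OF indep] by simp
  then obtain \<sigma> where dvd: "\<And>p. c dvd p - subst \<sigma> p" and kill_c: "subst \<sigma> c = 0"
    and lin: "\<And>a. a \<in> Rdeg 1 \<Longrightarrow> \<exists>k. subst \<sigma> a = a - Const k * c"
    using linear_form_eliminationE[OF c] by blast
  obtain ka kb where sa: "subst \<sigma> a = a - Const ka * c" and sb: "subst \<sigma> b = b - Const kb * c"
    using lin[OF a] lin[OF b] by blast
  have sa_deg: "subst \<sigma> a \<in> Rdeg 1" and sb_deg: "subst \<sigma> b \<in> Rdeg 1"
    unfolding sa sb by (intro Rdeg_diff Rdeg_Const_mult a b c)+
  have indep\<sigma>: "kindep [subst \<sigma> a, subst \<sigma> b]"
    unfolding kindep_pair_iff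
  proof (intro allI impI)
    fix x y
    assume "Const x * subst \<sigma> a + Const y * subst \<sigma> b = 0"
    moreover have "Const x * subst \<sigma> a + Const y * subst \<sigma> b =
        Const x * a + Const y * b + Const (- (x * ka + y * kb)) * c"
      by (simp add: sa sb Const_uminus Const_diff algebra_simps flip: Const_mult)
    ultimately show "x = 0 \<and> y = 0"
      using indep unfolding kindep_triple_iff by simp
  qed
  have rel\<sigma>: "subst \<sigma> a * subst \<sigma> f + subst \<sigma> b * subst \<sigma> g = 0"
    using arg_cong[OF rel, of "subst \<sigma>"] by (simp add: subst_add subst_mult kill_c)
  then obtain m where m: "subst \<sigma> f = subst \<sigma> b * m"
    using linear_relation_dvd[OF sa_deg sb_deg indep\<sigma>] by blast
  have "subst \<sigma> b * (subst \<sigma> g + subst \<sigma> a * m) = 0"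
    using rel\<sigma> unfolding m by (simp add: algebra_simps)
  then have g\<sigma>: "subst \<sigma> g = - (subst \<sigma> a * m)"
    using kindep_nonzero[OF indep\<sigma>] by (simp add: eq_neg_iff_add_eq_0)
  obtain s0 where s0: "f - subst \<sigma> f = c * s0"
    using dvd[of f] by (elim dvdE)
  obtain t0 where t0: "g - subst \<sigma> g = c * t0"
    using dvd[of g] by (elim dvdE)
  define s where "s = s0 - Const kb * m"
  define t where "t = t0 + Const ka * m"
  have F: "f = b * m + c * s"
    using s0 unfolding m sb s_def by (simp add: algebra_simps)
  have G: "g = c * t - a * m"
    using t0 unfolding g\<sigma> sa t_def by (simp add: algebra_simps)
  have "c * (h + a * s + b * t) = a * f + b * g + c * h"
    unfolding F G by (simp add: algebra_simps)
  then have "h + a * s + b * t = 0"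
    using rel \<open>c \<noteq> 0\<close> by simp
  then have H: "h = - (a * s) - b * t"
    by (simp add: algebra_simps add_eq_0_iff2)
  show thesis
    by (rule that[OF F G H])
qed

lemma graded_koszul_syzygy:
  fixes a b c f g h :: "'a::field mpoly4"
  assumes a: "a \<in> Rdeg 1" and b: "b \<in> Rdeg 1" and c: "c \<in> Rdeg 1" and indep: "kindep [a, b, c]"
    and f: "f \<in> Rdeg (Suc d)" and g: "g \<in> Rdeg (Suc d)" and h: "h \<in> Rdeg (Suc d)"
    and rel: "a * f + b * g + c * h = 0"
  obtains m s t where "m \<in> Rdeg d" "s \<in> Rdeg d" "t \<in> Rdeg d"
    "f = b * m + c * s" "g = c * t - a * m" "h = - (a * s) - b * t"
proof -
  obtain m s t where F: "f = b * m + c * s" and G: "g = c * t - a * m" and H: "h = - (a * s) - b * t"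
    by (rule koszul_syzygy[OF a b c indep rel])
  note hcomp_eqs = hcomp_add hcomp_diff hcomp_uminus hcomp_linear_mult[OF a]
    hcomp_linear_mult[OF b] hcomp_linear_mult[OF c]
  have "f = b * hcomp d m + c * hcomp d s"
    using arg_cong[OF F, of "hcomp (Suc d)"] by (simp add: hcomp_id[OF f] hcomp_eqs)
  moreover have "g = c * hcomp d t - a * hcomp d m"
    using arg_cong[OF G, of "hcomp (Suc d)"] by (simp add: hcomp_id[OF g] hcomp_eqs)
  moreover have "h = - (a * hcomp d s) - b * hcomp d t"
    using arg_cong[OF H, of "hcomp (Suc d)"] by (simp add: hcomp_id[OF h] hcomp_eqs)
  ultimately show thesis
    by (rule that[OF hcomp_Rdeg hcomp_Rdeg hcomp_Rdeg])
qed

subsection \<open>Nets of quadrics with a single linear relation\<close>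

lemma in_linrels_swap23: "(a, b, c) \<in> linrels f h g \<longleftrightarrow> (a, c, b) \<in> linrels f g h"
  by (auto simp: linrels_def ac_simps)

lemma in_linrels_rotate: "(a, b, c) \<in> linrels g h f \<longleftrightarrow> (c, a, b) \<in> linrels f g h"
  by (auto simp: linrels_def ac_simps)

lemma linrels_generator_dependent:
  fixes f g h :: "'a::field mpoly4"
  assumes f: "f \<in> Rdeg 2" and g: "g \<in> Rdeg 2" and h: "h \<in> Rdeg 2" and "f \<noteq> 0"
    and gen: "linrels f g h = {(Const k * r1, Const k * r2, Const k * r3) | k. True}"
  shows "\<not> kindep [r1, r2, r3]"
proof
  assume indep: "kindep [r1, r2, r3]"
  have "(r1, r2, r3) \<in> linrels f g h"
    unfolding gen by (auto intro!: exI[of _ 1])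
  then have r: "r1 \<in> Rdeg 1" "r2 \<in> Rdeg 1" "r3 \<in> Rdeg 1" and rel: "r1 * f + r2 * g + r3 * h = 0"
    by (simp_all add: linrels_def)
  obtain m s t where mst: "m \<in> Rdeg 1" "s \<in> Rdeg 1" "t \<in> Rdeg 1"
    and F: "f = r2 * m + r3 * s" and G: "g = r3 * t - r1 * m" and H: "h = - (r1 * s) - r2 * t"
    using graded_koszul_syzygy[OF r indep, of f 1 g h] f g h rel by (auto simp: Suc_1)
  have "t * f + (- s) * g + m * h = 0"
    unfolding F G H by (simp add: algebra_simps)
  then have "(t, - s, m) \<in> linrels f g h"
    using mst by (simp add: linrels_def Rdeg_uminus)
  then obtain k where k: "- s = Const k * r2" "m = Const k * r3"
    unfolding gen by blast
  then have "s = - (Const k * r2)"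
    by (metis minus_minus)
  then have "f = 0"
    unfolding F k(2) by (simp add: algebra_simps)
  with \<open>f \<noteq> 0\<close> show False ..
qed

definition lU_presentation ::
    "'a::field mpoly4 set \<Rightarrow> 'a mpoly4 \<Rightarrow> 'a mpoly4 \<Rightarrow> 'a mpoly4 \<Rightarrow> 'a mpoly4 \<Rightarrow> bool"
  where "lU_presentation V l u1 u2 h' \<longleftrightarrow>
    l \<in> Rdeg 1 \<and> u1 \<in> Rdeg 1 \<and> u2 \<in> Rdeg 1 \<and> kindep [u1, u2] \<and> h' \<in> Rdeg 2 \<and>
    V = kspan {l * u1, l * u2, h'} \<and> \<not> l dvd h' \<and>
    (\<forall>u \<in> kspan {u1, u2}. u \<noteq> 0 \<longrightarrow> \<not> u dvd h')"

definition net_normal_form :: "'a::field mpoly4 set \<Rightarrow> bool"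
  where "net_normal_form V \<longleftrightarrow>
    (\<exists>w x y z h'. w \<in> Rdeg 1 \<and> x \<in> Rdeg 1 \<and> y \<in> Rdeg 1 \<and> z \<in> Rdeg 1 \<and>
      kindep [w, x, y, z] \<and> h' \<in> Rdeg 2 \<and>
      ((V = kspan {x * w, y * w, h'} \<and> \<not> w dvd h' \<and>
          (\<forall>u \<in> kspan {x, y}. u \<noteq> 0 \<longrightarrow> \<not> u dvd h')) \<or>
       (V = kspan {w * w, w * x, h'} \<and> (\<forall>u \<in> kspan {w, x}. u \<noteq> 0 \<longrightarrow> \<not> u dvd h'))))"

lemma lU_presentation_swap: "lU_presentation V l u1 u2 h' \<Longrightarrow> lU_presentation V l u2 u1 h'"
  unfolding lU_presentation_def by (auto simp: insert_commute kindep_pair_swap)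

lemma net_normal_form_of_lU_presentation_in_span:
  assumes form: "lU_presentation V l u1 u2 h'" and l: "l = Const s * u1 + Const t * u2" and "s \<noteq> 0"
  shows "net_normal_form V"
proof -
  have deg: "l \<in> Rdeg 1" "u1 \<in> Rdeg 1" "u2 \<in> Rdeg 1" "h' \<in> Rdeg 2"
    and indep: "kindep [u1, u2]" and V: "V = kspan {l * u1, l * u2, h'}"
    and no_dvd: "\<forall>u \<in> kspan {u1, u2}. u \<noteq> 0 \<longrightarrow> \<not> u dvd h'"
    using form unfolding lU_presentation_def by auto
  have "kindep [l, u2]"
    unfolding kindep_pair_iff
  proof (intro allI impI)
    fix x y
    assume "Const x * l + Const y * u2 = 0"
    then have "Const (x * s) * u1 + Const (x * t + y) * u2 = 0"
      unfolding l by (simp add: algebra_simps Const_add flip: Const_mult)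
    then show "x = 0 \<and> y = 0"
      using indep \<open>s \<noteq> 0\<close> unfolding kindep_pair_iff by fastforce
  qed
  then obtain y where "y \<in> Rdeg 1" "kindep [l, u2, y]"
    using kindep_extendE[of "[l, u2]"] by auto
  moreover from this obtain z where "z \<in> Rdeg 1" "kindep [l, u2, y, z]"
    using kindep_extendE[of "[l, u2, y]"] by auto
  moreover have "V = kspan {l * l, l * u2, h'}"
  proof -
    have "l * l = Const s * (l * u1) + Const t * (l * u2)"
      unfolding l by (simp add: algebra_simps)
    then show ?thesis
      unfolding V using kspan_replace_by_combination[OF \<open>s \<noteq> 0\<close>] by simp
  qed
  moreover have "kspan {l, u2} \<subseteq> kspan {u1, u2}"
    unfolding kspan_eq_span l
    by (intro vs.span_minimal) (auto intro: vs.span_add vs.span_scale vs.span_base)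
  ultimately show ?thesis
    unfolding net_normal_form_def using deg no_dvd by blast
qed

lemma net_normal_form_of_lU_presentation:
  assumes form: "lU_presentation V l u1 u2 h'" and "l \<noteq> 0"
  shows "net_normal_form V"
proof (cases "l \<in> kspan {u1, u2}")
  case True
  then obtain s t where l: "l = Const s * u1 + Const t * u2"
    by (rule kspan_pairE)
  show ?thesis
  proof (cases "s = 0")
    case False
    then show ?thesis
      using net_normal_form_of_lU_presentation_in_span[OF form l] by blast
  next
    case True
    then have "l = Const t * u2 + Const s * u1" "t \<noteq> 0"
      using l \<open>l \<noteq> 0\<close> by auto
    then show ?thesis
      using net_normal_form_of_lU_presentation_in_span[OF lU_presentation_swap[OF form]] by blast
  qed
next
  case False
  have deg: "l \<in> Rdeg 1" "u1 \<in> Rdeg 1" "u2 \<in> Rdeg 1" "h' \<in> Rdeg 2" and indep: "kindep [u1, u2]"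
    and V: "V = kspan {l * u1, l * u2, h'}"
    using form unfolding lU_presentation_def by auto
  have "kindep [u1, u2, l]"
    using kindep_snoc[OF indep, of l] False by (simp add: kspan_eq_span)
  then have "kindep [l, u1, u2]"
    by (rule kindep_triple_rotate[OF kindep_triple_rotate])
  then obtain z where "z \<in> Rdeg 1" "kindep [l, u1, u2, z]"
    using kindep_extendE[of "[l, u1, u2]"] by auto
  moreover have "V = kspan {u1 * l, u2 * l, h'}"
    unfolding V by (simp add: mult.commute)
  ultimately show ?thesis
    using form deg unfolding net_normal_form_def lU_presentation_def by blast
qed

lemma lU_presentation_of_two_term_relation:
  fixes p q h r1 r2 :: "'a::field mpoly4"
  assumes p: "p \<in> Rdeg 2" and q: "q \<in> Rdeg 2" and h: "h \<in> Rdeg 2" and indep: "kindep [p, q, h]"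
    and r1: "r1 \<in> Rdeg 1" and r2: "r2 \<in> Rdeg 1" and r_nz: "(r1, r2) \<noteq> (0, 0)"
    and rel: "r1 * p + r2 * q = 0"
    and rigid: "\<And>A B C. A \<in> Rdeg 1 \<Longrightarrow> B \<in> Rdeg 1 \<Longrightarrow> C \<in> Rdeg 1 \<Longrightarrow>
      A * p + B * q + C * h = 0 \<Longrightarrow> C = 0"
  obtains l where "l \<noteq> 0" "lU_presentation (kspan {p, q, h}) l r2 (- r1) h"
proof -
  have "kindep [p, q]"
    using indep unfolding kindep_pair_iff kindep_triple_iff by (metis Const_0 add_0_right mult_zero_left)
  then have r_indep: "kindep [r1, r2]"
    using rel r_nz by (rule kindep_relation_coeffs)
  then have "r2 \<noteq> 0"
    by (rule kindep_nonzero) simp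
  have quadrics: "p \<in> Rdeg (Suc 1)" "h \<in> Rdeg (Suc 1)"
    using p h by (simp_all add: Suc_1)
  obtain l where l: "l \<in> Rdeg 1" and "p = r2 * l"
    by (rule linear_dvd_formE[OF r2 quadrics(1) linear_relation_dvd[OF r1 r2 r_indep rel]])
  then have pl: "p = l * r2"
    by (simp add: mult.commute)
  have "r2 * (q + l * r1) = r1 * p + r2 * q"
    unfolding pl by (simp add: algebra_simps)
  then have ql: "q = l * - r1"
    using rel \<open>r2 \<noteq> 0\<close> by (simp add: eq_neg_iff_add_eq_0)
  have "p \<noteq> 0"
    by (rule kindep_nonzero[OF indep]) simp
  then have "l \<noteq> 0"
    using pl by auto
  have "\<not> l dvd h"
  proof
    assume "l dvd h"
    then obtain m where m: "m \<in> Rdeg 1" and hm: "h = l * m"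
      by (rule linear_dvd_formE[OF l quadrics(2)])
    have "m * p + 0 * q + (- r2) * h = 0"
      unfolding pl hm by (simp add: algebra_simps)
    then show False
      using rigid[OF m Rdeg_0 Rdeg_uminus[OF r2]] \<open>r2 \<noteq> 0\<close> by simp
  qed
  moreover have "\<not> u dvd h" if "u \<in> kspan {r2, - r1}" "u \<noteq> 0" for u
  proof
    assume "u dvd h"
    obtain s t where u: "u = Const s * r2 + Const t * - r1"
      using \<open>u \<in> kspan {r2, - r1}\<close> by (rule kspan_pairE)
    have "u \<in> Rdeg 1"
      unfolding u by (intro Rdeg_add Rdeg_Const_mult r2 Rdeg_uminus r1)
    then obtain m where m: "m \<in> Rdeg 1" and hm: "h = u * m"
      by (rule linear_dvd_formE[OF _ quadrics(2) \<open>u dvd h\<close>])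
    have "(- (Const s * m)) * p + (- (Const t * m)) * q + l * h = 0"
      unfolding pl ql hm u by (simp add: algebra_simps)
    moreover have "- (Const s * m) \<in> Rdeg 1" "- (Const t * m) \<in> Rdeg 1"
      using m by (simp_all add: Rdeg_uminus Rdeg_Const_mult)
    ultimately show False
      using rigid[OF _ _ l] \<open>l \<noteq> 0\<close> by blast
  qed
  ultimately have "lU_presentation (kspan {p, q, h}) l r2 (- r1) h"
    unfolding lU_presentation_def pl ql
    using l r1 r2 h kindep_pair_rotate[OF r_indep] by (auto simp: Rdeg_uminus)
  with \<open>l \<noteq> 0\<close> show thesis
    by (rule that)
qed

lemma lU_presentation_of_dependent_generator:
  fixes f g h r1 r2 r3 :: "'a::field mpoly4"
  assumes f: "f \<in> Rdeg 2" and g: "g \<in> Rdeg 2" and h: "h \<in> Rdeg 2" and indep: "kindep [f, g, h]"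
    and gen: "linrels f g h = {(Const k * r1, Const k * r2, Const k * r3) | k. True}"
    and r_nz: "(r1, r2, r3) \<noteq> (0, 0, 0)" and r3: "r3 = Const c1 * r1 + Const c2 * r2"
  obtains l u1 u2 h' where "l \<noteq> 0" "lU_presentation (kspan {f, g, h}) l u1 u2 h'"
proof -
  define p where "p = f + Const c1 * h"
  define q where "q = g + Const c2 * h"
  have "(r1, r2, r3) \<in> linrels f g h"
    unfolding gen by (auto intro!: exI[of _ 1])
  then have r1: "r1 \<in> Rdeg 1" and r2: "r2 \<in> Rdeg 1" and "r1 * f + r2 * g + r3 * h = 0"
    by (simp_all add: linrels_def)
  then have rel: "r1 * p + r2 * q = 0"
    unfolding p_def q_def r3 by (simp add: algebra_simps)
  have "(r1, r2) \<noteq> (0, 0)"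
    using r_nz r3 by auto
  have pq: "p \<in> Rdeg 2" "q \<in> Rdeg 2"
    unfolding p_def q_def by (intro Rdeg_add Rdeg_Const_mult f g h)+
  have indep_pqh: "kindep [p, q, h]"
    unfolding kindep_triple_iff
  proof (intro allI impI)
    fix x y z
    assume "Const x * p + Const y * q + Const z * h = 0"
    then have "Const x * f + Const y * g + Const (x * c1 + y * c2 + z) * h = 0"
      unfolding p_def q_def by (simp add: algebra_simps Const_add flip: Const_mult)
    then show "x = 0 \<and> y = 0 \<and> z = 0"
      using indep unfolding kindep_triple_iff by fastforce
  qed
  have rigid: "C = 0"
    if A: "A \<in> Rdeg 1" and B: "B \<in> Rdeg 1" and C: "C \<in> Rdeg 1" and "A * p + B * q + C * h = 0"
    for A B C
  proof -
    have "A * f + B * g + (C + Const c1 * A + Const c2 * B) * h = 0"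
      using that(4) unfolding p_def q_def by (simp add: algebra_simps)
    moreover have "C + Const c1 * A + Const c2 * B \<in> Rdeg 1"
      by (intro Rdeg_add Rdeg_Const_mult A B C)
    ultimately have "(A, B, C + Const c1 * A + Const c2 * B) \<in> linrels f g h"
      using A B by (simp add: linrels_def)
    then obtain k where "A = Const k * r1" "B = Const k * r2"
      "C + Const c1 * A + Const c2 * B = Const k * r3"
      unfolding gen by blast
    then show "C = 0"
      unfolding r3 by (simp add: algebra_simps)
  qed
  obtain l where "l \<noteq> 0" "lU_presentation (kspan {p, q, h}) l r2 (- r1) h"
    by (rule lU_presentation_of_two_term_relation[OF pq h indep_pqh r1 r2 \<open>(r1, r2) \<noteq> (0, 0)\<close> rel rigid])
  moreover have "kspan {p, q, h} = kspan {f, g, h}"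
    unfolding p_def q_def by (rule kspan_shear)
  ultimately show thesis
    using that[of l] by simp
qed

lemma lU_presentation_exists:
  fixes f g h :: "'a::field mpoly4"
  assumes f: "f \<in> Rdeg 2" and g: "g \<in> Rdeg 2" and h: "h \<in> Rdeg 2" and indep: "kindep [f, g, h]"
    and one_dim: "one_dim_triples (linrels f g h)"
  obtains l u1 u2 h' where "l \<noteq> 0" "lU_presentation (kspan {f, g, h}) l u1 u2 h'"
proof -
  obtain r1 r2 r3 where r_nz: "(r1, r2, r3) \<noteq> (0, 0, 0)"
    and gen: "linrels f g h = {(Const k * r1, Const k * r2, Const k * r3) | k. True}"
    using one_dim unfolding one_dim_triples_def by blast
  have "f \<noteq> 0"
    by (rule kindep_nonzero[OF indep]) simp
  then have "\<not> kindep [r1, r2, r3]"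
    by (rule linrels_generator_dependent[OF f g h _ gen])
  then obtain x y z where dep: "Const x * r1 + Const y * r2 + Const z * r3 = 0"
    and "(x, y, z) \<noteq> (0, 0, 0)"
    unfolding kindep_triple_iff by blast
  then consider "z \<noteq> 0" | "y \<noteq> 0" | "x \<noteq> 0"
    by auto
  then show thesis
  proof cases
    case 1
    then have "r3 = Const (- x / z) * r1 + Const (- y / z) * r2"
      using dep by (intro combination_eq_0_solve)
    then show thesis
      by (rule lU_presentation_of_dependent_generator[OF f g h indep gen r_nz]) (rule that)
  next
    case 2
    have "Const x * r1 + Const z * r3 + Const y * r2 = 0"
      using dep by (simp add: ac_simps)
    then have r2: "r2 = Const (- x / y) * r1 + Const (- z / y) * r3"
      using 2 by (rule combination_eq_0_solve)
    have gen': "linrels f h g = {(Const k * r1, Const k * r3, Const k * r2) | k. True}"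
      by (auto simp: set_eq_iff in_linrels_swap23[where f = f and g = g and h = h] gen)
    have r_nz': "(r1, r3, r2) \<noteq> (0, 0, 0)"
      using r_nz by auto
    obtain l u1 u2 h' where "l \<noteq> 0" "lU_presentation (kspan {f, h, g}) l u1 u2 h'"
      by (rule lU_presentation_of_dependent_generator[OF f h g kindep_triple_swap23[OF indep] gen' r_nz' r2])
    then show thesis
      using that[of l] by (simp add: insert_commute)
  next
    case 3
    have "Const y * r2 + Const z * r3 + Const x * r1 = 0"
      using dep by (simp add: ac_simps)
    then have r1: "r1 = Const (- y / x) * r2 + Const (- z / x) * r3"
      using 3 by (rule combination_eq_0_solve)
    have gen': "linrels g h f = {(Const k * r2, Const k * r3, Const k * r1) | k. True}"
      by (auto simp: set_eq_iff in_linrels_rotate[where f = f and g = g and h = h] gen)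
    have r_nz': "(r2, r3, r1) \<noteq> (0, 0, 0)"
      using r_nz by auto
    obtain l u1 u2 h' where "l \<noteq> 0" "lU_presentation (kspan {g, h, f}) l u1 u2 h'"
      by (rule lU_presentation_of_dependent_generator[OF g h f kindep_triple_rotate[OF indep] gen' r_nz' r1])
    then show thesis
      using that[of l] by (simp add: insert_commute)
  qed
qed

theorem lemma3p2:
  fixes f g h :: "'a::alg_closed_field mpoly4"
  assumes "f \<in> Rdeg 2" "g \<in> Rdeg 2" "h \<in> Rdeg 2"
    and "kindep [f, g, h]"
    and "one_dim_triples (linrels f g h)"
  shows "(\<exists>l u1 u2 h'. l \<in> Rdeg 1 \<and> u1 \<in> Rdeg 1 \<and> u2 \<in> Rdeg 1 \<and> kindep [u1, u2] \<and>
            h' \<in> Rdeg 2 \<and> kspan {f, g, h} = kspan {l * u1, l * u2, h'} \<and>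
            \<not> l dvd h' \<and> (\<forall>u \<in> kspan {u1, u2}. u \<noteq> 0 \<longrightarrow> \<not> u dvd h'))
       \<and> (\<exists>w x y z h'. w \<in> Rdeg 1 \<and> x \<in> Rdeg 1 \<and> y \<in> Rdeg 1 \<and> z \<in> Rdeg 1 \<and>
            kindep [w, x, y, z] \<and> h' \<in> Rdeg 2 \<and>
            ((kspan {f, g, h} = kspan {x * w, y * w, h'} \<and> \<not> w dvd h' \<and>
                (\<forall>u \<in> kspan {x, y}. u \<noteq> 0 \<longrightarrow> \<not> u dvd h')) \<or>
             (kspan {f, g, h} = kspan {w * w, w * x, h'} \<and>
                (\<forall>u \<in> kspan {w, x}. u \<noteq> 0 \<longrightarrow> \<not> u dvd h'))))"
proof -
  obtain l u1 u2 h' where "l \<noteq> 0" and form: "lU_presentation (kspan {f, g, h}) l u1 u2 h'"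
    by (rule lU_presentation_exists[OF assms])
  have "\<exists>l u1 u2 h'. lU_presentation (kspan {f, g, h}) l u1 u2 h'"
    using form by blast
  moreover have "net_normal_form (kspan {f, g, h})"
    using form \<open>l \<noteq> 0\<close> by (rule net_normal_form_of_lU_presentation)
  ultimately show ?thesis
    unfolding lU_presentation_def net_normal_form_def by (rule conjI)
qed

end
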